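(* Let $k\in\mathbb N$ and $n\in\mathbb Z^+$, with $a_j$, $\Phi_m,\Psi_m$, $\Phi_n^{(k)},\Psi_n^{(k)}$ as in the context. Then $$2z^k\prod_{j=0}^{k-1}(1-|a_j|^2)\begin{pmatrix}\Phi_n^{(k)}&\Psi_n^{(k)}\\ \Phi_n^{(k)*}&-\Psi_n^{(k)*}\end{pmatrix}=\begin{pmatrix}\Phi_{n+k}&\Psi_{n+k}\\ \Phi_{n+k}^*&-\Psi_{n+k}^*\end{pmatrix}\begin{pmatrix}\Psi_k^*+\Psi_k&\Psi_k^*-\Psi_k\\ \Phi_k^*-\Phi_k&\Phi_k^*+\Phi_k\end{pmatrix}.$$
   Context: $\mathbb N=\{1,2,\dots\}$, $\mathbb Z^+=\mathbb N\cup\{0\}$. For a polynomial $p$ indexed by $m$, $p^*(z)=z^m\overline{p(1/\bar z)}$ (reversal with respect to degree $m$; e.g. $\Phi_n^{(k)*}$ is taken with respect to degree $n$). Let $\sigma$ be a positive Borel measure on $[0,2\pi)$ with infinite support; $\Phi_m$ the monic degree-$m$ polynomials orthogonal with respect to $\sigma$ on the unit circle; $a_m=-\overline{\Phi_{m+1}(0)}$, so $|a_m|<1$, $\Phi_0=1$, $\Phi_{m+1}=z\Phi_m-\overline{a_m}\Phi_m^*$; $\Psi_0=1$, $\Psi_{m+1}=z\Psi_m+\overline{a_m}\Psi_m^*$. The $k$th associated polynomials: $\Phi_0^{(k)}=\Psi_0^{(k)}=1$, $\Phi_{m+1}^{(k)}=z\Phi_m^{(k)}-\overline{a_{m+k}}\,\Phi_m^{(k)*}$,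 $\Psi_{m+1}^{(k)}=z\Psi_m^{(k)}+\overline{a_{m+k}}\,\Psi_m^{(k)*}$. *)

theory Defs
  imports "HOL-Computational_Algebra.Polynomial" Complex_Main
begin

text \<open>Reversal with respect to degree m: p* (z) = z^m conj(p(1/conj z)),
  i.e. the coefficient of z^i in p* is conj(coeff p (m - i)) for i \<le> m.\<close>
definition rev_star :: "nat \<Rightarrow> complex poly \<Rightarrow> complex poly" where
  "rev_star m p = (\<Sum>i\<le>m. monom (cnj (coeff p (m - i))) i)"

fun Phi :: "(nat \<Rightarrow> complex) \<Rightarrow> nat \<Rightarrow> complex poly" where
  "Phi a 0 = 1"
| "Phi a (Suc m) = [:0, 1:] * Phi a m - smult (cnj (a m)) (rev_star m (Phi a m))"

fun Psi :: "(nat \<Rightarrow> complex) \<Rightarrow> nat \<Rightarrow> complex poly" where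
  "Psi a 0 = 1"
| "Psi a (Suc m) = [:0, 1:] * Psi a m + smult (cnj (a m)) (rev_star m (Psi a m))"

definition Phi_assoc :: "(nat \<Rightarrow> complex) \<Rightarrow> nat \<Rightarrow> nat \<Rightarrow> complex poly" where
  "Phi_assoc a k m = Phi (\<lambda>j. a (j + k)) m"

definition Psi_assoc :: "(nat \<Rightarrow> complex) \<Rightarrow> nat \<Rightarrow> nat \<Rightarrow> complex poly" where
  "Psi_assoc a k m = Psi (\<lambda>j. a (j + k)) m"

end

theory Submission
  imports Defs
begin

text \<open>The pairs \<open>(\<Phi>\<^sub>m, \<Phi>\<^sub>m\<^sup>*)\<close> and \<open>(\<Psi>\<^sub>m, -\<Psi>\<^sub>m\<^sup>*)\<close> both obey one and the same linear
  recursion \<open>v\<^sub>m\<^sub>+\<^sub>1 = T\<^sub>m v\<^sub>m\<close> with \<open>T\<^sub>m = [[z, -conj a\<^sub>m], [-a\<^sub>m z, 1]]\<close>, and the associated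
  pairs obey it with \<open>T\<^sub>m\<^sub>+\<^sub>k\<close> from the starting values \<open>(1, 1)\<close> and \<open>(1, -1)\<close>.
  Since \<open>det T\<^sub>m = z (1 - |a\<^sub>m|\<^sup>2)\<close>, the determinant of the columns at step \<open>k\<close> is
  \<open>-c = -2 z\<^sup>k \<Prod>(1 - |a\<^sub>j|\<^sup>2)\<close>, so the adjugate shows that \<open>c (1, 1)\<close> and \<open>c (1, -1)\<close>
  are combinations of these columns with the coefficients of the right-hand matrix.
  Applying \<open>T\<^sub>n\<^sub>+\<^sub>k\<^sub>-\<^sub>1 \<cdots> T\<^sub>k\<close>, which is linear, yields the identity.\<close>

lemma coeff_rev_star:
  "coeff (rev_star m p) i = (if i \<le> m then cnj (coeff p (m - i)) else 0)"
  unfolding rev_star_def by (simp add: coeff_sum coeff_monom)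

lemma degree_rev_star: "degree (rev_star m p) \<le> m"
  by (rule degree_le) (simp add: coeff_rev_star)

lemma rev_star_add: "rev_star m (p + q) = rev_star m p + rev_star m q"
  by (rule poly_eqI) (simp add: coeff_rev_star)

lemma rev_star_diff: "rev_star m (p - q) = rev_star m p - rev_star m q"
  by (rule poly_eqI) (simp add: coeff_rev_star)

lemma rev_star_smult: "rev_star m (smult c p) = smult (cnj c) (rev_star m p)"
  by (rule poly_eqI) (simp add: coeff_rev_star)

lemma rev_star_0_1: "rev_star 0 1 = 1"
  by (rule poly_eqI) (simp add: coeff_rev_star coeff_1)

lemma rev_star_Suc_pCons_0: "rev_star (Suc m) (pCons 0 p) = rev_star m p"
  by (rule poly_eqI) (auto simp: coeff_rev_star coeff_pCons Suc_diff_le split: nat.split)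

lemma rev_star_Suc: "degree p \<le> m \<Longrightarrow> rev_star (Suc m) p = pCons 0 (rev_star m p)"
  by (rule poly_eqI) (auto simp: coeff_rev_star coeff_pCons coeff_eq_0 split: nat.split)

lemma rev_star_rev_star: "degree p \<le> m \<Longrightarrow> rev_star m (rev_star m p) = p"
  by (rule poly_eqI) (auto simp: coeff_rev_star coeff_eq_0)

lemma degree_Phi: "degree (Phi a m) \<le> m"
proof (induction m)
  case (Suc m)
  then have "degree ([:0, 1:] * Phi a m) \<le> Suc m"
    by (simp add: degree_pCons_eq_if)
  moreover have "degree (smult (cnj (a m)) (rev_star m (Phi a m))) \<le> Suc m"
    using degree_rev_star[of m] by (meson degree_smult_le le_SucI order_trans)
  ultimately show ?case by (simp add: degree_diff_le)
qed simp

lemma degree_Psi: "degree (Psi a m) \<le> m"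
proof (induction m)
  case (Suc m)
  then have "degree ([:0, 1:] * Psi a m) \<le> Suc m"
    by (simp add: degree_pCons_eq_if)
  moreover have "degree (smult (cnj (a m)) (rev_star m (Psi a m))) \<le> Suc m"
    using degree_rev_star[of m] by (meson degree_smult_le le_SucI order_trans)
  ultimately show ?case by (simp add: degree_add_le)
qed simp

definition column_comb :: "'a::comm_ring_1 \<Rightarrow> 'a \<times> 'a \<Rightarrow> 'a \<Rightarrow> 'a \<times> 'a \<Rightarrow> 'a \<times> 'a" where
  "column_comb u v w v' = (u * fst v + w * fst v', u * snd v + w * snd v')"

definition column_det :: "'a::comm_ring_1 \<times> 'a \<Rightarrow> 'a \<times> 'a \<Rightarrow> 'a" where
  "column_det v v' = fst v * snd v' - snd v * fst v'"

lemma column_comb_adjugate_plus: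
  "column_comb (fst v' - snd v') v (snd v - fst v) v' = (- column_det v v', - column_det v v')"
  by (simp add: column_comb_def column_det_def algebra_simps)

lemma column_comb_adjugate_minus:
  "column_comb (- fst v' - snd v') v (fst v + snd v) v' = (- column_det v v', column_det v v')"
  by (simp add: column_comb_def column_det_def algebra_simps)

definition szego_step :: "complex \<Rightarrow> complex poly \<times> complex poly \<Rightarrow> complex poly \<times> complex poly" where
  "szego_step \<alpha> v =
     ([:0, 1:] * fst v - smult (cnj \<alpha>) (snd v), snd v - smult \<alpha> ([:0, 1:] * fst v))"

fun szego_transfer ::
  "(nat \<Rightarrow> complex) \<Rightarrow> nat \<Rightarrow> complex poly \<times> complex poly \<Rightarrow> complex poly \<times> complex poly" where
  "szego_transfer a 0 v = v"
| "szego_transfer a (Suc n) v = szego_step (a n) (szego_transfer a n v)"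

lemma szego_step_column_comb:
  "szego_step \<alpha> (column_comb u v w v') = column_comb u (szego_step \<alpha> v) w (szego_step \<alpha> v')"
  by (simp add: szego_step_def column_comb_def algebra_simps smult_add_right)

lemma szego_transfer_column_comb:
  "szego_transfer a n (column_comb u v w v')
     = column_comb u (szego_transfer a n v) w (szego_transfer a n v')"
  by (induction n) (simp_all add: szego_step_column_comb)

lemma szego_transfer_scaled_comb:
  assumes "column_comb u v w v' = (c * fst e, c * snd e)"
  shows "column_comb u (szego_transfer a n v) w (szego_transfer a n v')
           = (c * fst (szego_transfer a n e), c * snd (szego_transfer a n e))"
proof -
  let ?T = "szego_transfer a n"
  have "column_comb u (?T v) w (?T v') = ?T (column_comb u v w v')"
    by (simp add: szego_transfer_column_comb)
  also have "\<dots> = ?T (column_comb c e 0 e)"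
    using assms by (simp add: column_comb_def)
  also have "\<dots> = column_comb c (?T e) 0 (?T e)"
    by (rule szego_transfer_column_comb)
  finally show ?thesis
    by (simp add: column_comb_def)
qed

lemma column_det_szego_step:
  "column_det (szego_step \<alpha> v) (szego_step \<alpha> v')
     = smult (1 - complex_of_real ((norm \<alpha>)\<^sup>2)) ([:0, 1:] * column_det v v')"
proof -
  have "column_det (szego_step \<alpha> v) (szego_step \<alpha> v')
      = [:0, 1:] * column_det v v' - smult (\<alpha> * cnj \<alpha>) ([:0, 1:] * column_det v v')"
    by (simp add: szego_step_def column_det_def algebra_simps smult_diff_right)
  also have "\<dots> = smult (1 - complex_of_real ((norm \<alpha>)\<^sup>2)) ([:0, 1:] * column_det v v')"
    by (simp only: complex_norm_square smult_diff_left smult_1_left)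
  finally show ?thesis .
qed

definition Phi_column :: "(nat \<Rightarrow> complex) \<Rightarrow> nat \<Rightarrow> complex poly \<times> complex poly" where
  "Phi_column a m = (Phi a m, rev_star m (Phi a m))"

definition Psi_column :: "(nat \<Rightarrow> complex) \<Rightarrow> nat \<Rightarrow> complex poly \<times> complex poly" where
  "Psi_column a m = (Psi a m, - rev_star m (Psi a m))"

lemma Phi_column_0: "Phi_column a 0 = (1, 1)"
  by (simp add: Phi_column_def rev_star_0_1)

lemma Psi_column_0: "Psi_column a 0 = (1, -1)"
  by (simp add: Psi_column_def rev_star_0_1)

lemma Phi_column_Suc: "Phi_column a (Suc m) = szego_step (a m) (Phi_column a m)"
  by (simp add: Phi_column_def szego_step_def rev_star_diff rev_star_smult rev_star_Suc_pCons_0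
      rev_star_Suc[OF degree_rev_star] rev_star_rev_star[OF degree_Phi])

lemma Psi_column_Suc: "Psi_column a (Suc m) = szego_step (a m) (Psi_column a m)"
  by (simp add: Psi_column_def szego_step_def rev_star_add rev_star_smult rev_star_Suc_pCons_0
      rev_star_Suc[OF degree_rev_star] rev_star_rev_star[OF degree_Psi])

lemma Phi_column_add: "Phi_column a (n + k) = szego_transfer (\<lambda>j. a (j + k)) n (Phi_column a k)"
  by (induction n) (simp_all add: Phi_column_Suc)

lemma Psi_column_add: "Psi_column a (n + k) = szego_transfer (\<lambda>j. a (j + k)) n (Psi_column a k)"
  by (induction n) (simp_all add: Psi_column_Suc)

lemma column_det_Phi_Psi:
  "column_det (Phi_column a m) (Psi_column a m)
     = - smult (2 * (\<Prod>j<m. 1 - complex_of_real ((norm (a j))\<^sup>2))) (monom 1 m)"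
proof (induction m)
  case 0
  then show ?case
    by (simp add: Phi_column_0 Psi_column_0 column_det_def numeral_poly)
next
  case (Suc m)
  then show ?case
    by (simp add: Phi_column_Suc Psi_column_Suc column_det_szego_step monom_Suc mult_ac)
qed

theorem theorem14:
  fixes a :: "nat \<Rightarrow> complex" and k n :: nat
  assumes verblunsky: "\<And>j. norm (a j) < 1"
    and k_pos: "k \<ge> 1"
  defines "c \<equiv> smult (2 * (\<Prod>j<k. 1 - complex_of_real ((norm (a j))\<^sup>2))) (monom 1 k)"
  shows "(c * Phi_assoc a k n
           = Phi a (n + k) * (rev_star k (Psi a k) + Psi a k)
             + Psi a (n + k) * (rev_star k (Phi a k) - Phi a k)) \<and>
         (c * Psi_assoc a k n
           = Phi a (n + k) * (rev_star k (Psi a k) - Psi a k)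
             + Psi a (n + k) * (rev_star k (Phi a k) + Phi a k)) \<and>
         (c * rev_star n (Phi_assoc a k n)
           = rev_star (n + k) (Phi a (n + k)) * (rev_star k (Psi a k) + Psi a k)
             - rev_star (n + k) (Psi a (n + k)) * (rev_star k (Phi a k) - Phi a k)) \<and>
         (c * (- rev_star n (Psi_assoc a k n))
           = rev_star (n + k) (Phi a (n + k)) * (rev_star k (Psi a k) - Psi a k)
             - rev_star (n + k) (Psi a (n + k)) * (rev_star k (Phi a k) + Phi a k))"
proof -
  let ?v = "Phi_column a k" and ?w = "Psi_column a k"
  let ?T = "szego_transfer (\<lambda>j. a (j + k)) n"
  have det: "column_det ?v ?w = - c"
    unfolding c_def by (rule column_det_Phi_Psi)
  have assoc: "Phi_column (\<lambda>j. a (j + k)) n = ?T (1, 1)"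
    "Psi_column (\<lambda>j. a (j + k)) n = ?T (1, -1)"
    using Phi_column_add[of "\<lambda>j. a (j + k)" n 0] Psi_column_add[of "\<lambda>j. a (j + k)" n 0]
    by (simp_all add: Phi_column_0 Psi_column_0)
  have "column_comb (fst ?w - snd ?w) (Phi_column a (n + k)) (snd ?v - fst ?v) (Psi_column a (n + k))
      = (c * fst (?T (1, 1)), c * snd (?T (1, 1)))"
    unfolding Phi_column_add Psi_column_add
    by (rule szego_transfer_scaled_comb) (simp add: column_comb_adjugate_plus det)
  moreover have "column_comb (- fst ?w - snd ?w) (Phi_column a (n + k)) (fst ?v + snd ?v) (Psi_column a (n + k))
      = (c * fst (?T (1, -1)), c * snd (?T (1, -1)))"
    unfolding Phi_column_add Psi_column_add
    by (rule szego_transfer_scaled_comb) (simp add: column_comb_adjugate_minus det)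
  ultimately show ?thesis
    unfolding assoc[symmetric] Phi_assoc_def Psi_assoc_def
    by (simp add: column_comb_def Phi_column_def Psi_column_def algebra_simps)
qed

end
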